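(* With $m_1,m_2$, $r$, $d$, ${\mathfrak p}$, $g$ and $k_{m_1,m_2}$ as below, define $F({\mathfrak z})=\int_{-1}^{{\mathfrak z}} g(t,k_{m_1,m_2})\,{\mathfrak p}(t)\,dt$. Then $F$ is smooth on $[-1,1]$ and satisfies: $F({\mathfrak z})>0$ for $-1<{\mathfrak z}<1$; $F(\pm1)=0$; $F'(-1)=2{\mathfrak p}(-1)/m_2$ and $F'(1)=-2{\mathfrak p}(1)/m_1$; and $\bigl(F'({\mathfrak z})/{\mathfrak p}({\mathfrak z})\bigr)'<0$ for all ${\mathfrak z}\in[-1,1]$.
   Context: $m_1,m_2$ are positive integers, $r$ is real with $0<|r|<1$, $d$ is a positive integer and ${\mathfrak p}(t)=(1+rt)^d$. The function $g(t,k)$ is $2\,\frac{(\frac1{m_1}+\frac1{m_2})e^{-kt}-(\frac{e^k}{m_1}+\frac{e^{-k}}{m_2})}{e^k-e^{-k}}$ for $k\neq0$ and $\frac{1-t}{m_2}-\frac{1+t}{m_1}$ for $k=0$. $k_{m_1,m_2}$ is the unique real number with $\int_{-1}^1 g(t,k_{m_1,m_2}){\mathfrak p}(t)\,dt=0$. *)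

theory Defs
  imports "HOL-Analysis.Analysis"
begin

definition pp :: "real \<Rightarrow> nat \<Rightarrow> real \<Rightarrow> real" where
  "pp r d t = (1 + r * t) ^ d"

definition gg :: "nat \<Rightarrow> nat \<Rightarrow> real \<Rightarrow> real \<Rightarrow> real" where
  "gg m1 m2 t k =
     (if k = 0 then (1 - t) / real m2 - (1 + t) / real m1
      else 2 * ((1 / real m1 + 1 / real m2) * exp (- k * t)
                 - (exp k / real m1 + exp (- k) / real m2)) / (exp k - exp (- k)))"

definition kk :: "nat \<Rightarrow> nat \<Rightarrow> real \<Rightarrow> nat \<Rightarrow> real" where
  "kk m1 m2 r d = (THE k. integral {-1..1} (\<lambda>t. gg m1 m2 t k * pp r d t) = 0)"

definition FF :: "nat \<Rightarrow> nat \<Rightarrow> real \<Rightarrow> nat \<Rightarrow> real \<Rightarrow> real" where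
  "FF m1 m2 r d z = integral {-1..z} (\<lambda>t. gg m1 m2 t (kk m1 m2 r d) * pp r d t)"

end

theory Submission
  imports Defs
begin

text \<open>Write A = 1/m1 and B = 1/m2. Then g(t,k) = 2(A+B) u_k(t) - 2A, where the profile u_k solves
u'' + k u' = 0 with u_k(-1) = 1 and u_k(1) = 0. Consequently g is strictly decreasing in t, which
gives (F'/p)' = \<partial>g/\<partial>t < 0, and F' = g p changes sign at most once on (-1,1); with
F(-1) = F(1) = 0 this forces F > 0 inside. The constant k is well defined because for |t| < 1 the
value u_k(t) decreases strictly in k and tends to 1 and 0 as k \<rightarrow> -\<infinity> and k \<rightarrow> \<infinity>, so
k \<mapsto> \<integral> g(t,k) p(t) dt is continuous, strictly decreasing and changes sign. Finally F is smooth
because F' is a polynomial times e^(-kt) plus a polynomial.\<close>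

lemma strict_antimono_if_neg_derivative:
  fixes f :: "real \<Rightarrow> real"
  assumes "\<And>t. \<exists>D<0. (f has_real_derivative D) (at t)" and "x < y"
  shows "f y < f x"
proof (rule DERIV_neg_imp_decreasing[OF \<open>x < y\<close>])
  fix t
  from assms(1)[of t] show "\<exists>D. (f has_real_derivative D) (at t) \<and> D < 0" by blast
qed

lemma add_one_less_exp: "x \<noteq> 0 \<Longrightarrow> 1 + x < exp (x::real)"
proof (cases "1 + x/2 < 0")
  case True
  thus ?thesis using exp_gt_zero[of x] by linarith
next
  case False
  assume "x \<noteq> 0"
  have "(1 + x/2)^2 = 1 + x + x^2 / 4"
    by (simp add: power2_eq_square field_simps)
  moreover have "0 < x^2"
    using \<open>x \<noteq> 0\<close> by simp
  ultimately have "1 + x < (1 + x/2)^2"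
    by linarith
  also have "\<dots> \<le> (exp (x/2))^2"
    using False by (intro power_mono) auto
  also have "\<dots> = exp x"
    by (simp add: power2_eq_square exp_add[symmetric])
  finally show ?thesis .
qed

lemma exp_neg_mult_LIMSEQ_0: "x > 0 \<Longrightarrow> (\<lambda>n. exp (- (real n * x))) \<longlonglongrightarrow> 0"
proof -
  assume "x > 0"
  hence "(\<lambda>n. exp (-x) ^ n) \<longlonglongrightarrow> 0"
    by (intro LIMSEQ_power_zero) auto
  thus ?thesis by (simp add: exp_of_nat_mult[symmetric])
qed

lemma deriv_poly_exp:
  fixes P Q :: "real poly"
  shows "deriv (\<lambda>t. poly P t * exp (c * t) + poly Q t)
           = (\<lambda>t. poly (pderiv P + smult c P) t * exp (c * t) + poly (pderiv Q) t)"
proof (rule ext, rule DERIV_imp_deriv)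
  fix t :: real
  show "((\<lambda>t. poly P t * exp (c * t) + poly Q t) has_real_derivative
          poly (pderiv P + smult c P) t * exp (c * t) + poly (pderiv Q) t) (at t)"
    by (auto intro!: derivative_eq_intros poly_DERIV simp: algebra_simps)
qed

lemma higher_deriv_poly_exp_differentiable:
  fixes P Q :: "real poly"
  shows "(deriv ^^ n) (\<lambda>t. poly P t * exp (c * t) + poly Q t) differentiable (at x)"
proof (induction n arbitrary: P Q)
  case 0
  show ?case
    unfolding real_differentiable_def by (auto intro!: exI derivative_eq_intros poly_DERIV)
next
  case (Suc n)
  show ?case
    unfolding funpow_Suc_right comp_def deriv_poly_exp by (rule Suc.IH)
qed

lemma higher_deriv_differentiable_of_derivative:
  fixes G h :: "real \<Rightarrow> real"
  assumes "\<And>x. (G has_real_derivative h x) (at x)"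
    and "\<And>n x. (deriv ^^ n) h differentiable (at x)"
  shows "(deriv ^^ n) G differentiable (at x)"
proof (cases n)
  case 0
  thus ?thesis using assms(1) real_differentiable_def by auto
next
  case (Suc n')
  have "deriv G = h"
    using assms(1) by (intro ext DERIV_imp_deriv)
  thus ?thesis
    using assms(2)[of n' x] by (simp add: Suc funpow_Suc_right del: funpow.simps)
qed

lemma signed_integral_eq_shifted:
  fixes f :: "real \<Rightarrow> real"
  assumes "continuous_on UNIV f" "c \<le> a" "c \<le> y"
  shows "integral {a..y} f - integral {y..a} f = integral {c..y} f - integral {c..a} f"
proof -
  have int: "f integrable_on {u..v}" for u v
    by (rule integrable_continuous_interval[OF continuous_on_subset[OF assms(1) subset_UNIV]])
  show ?thesis
  proof (cases "a \<le> y")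
    case True
    have "integral {c..a} f + integral {a..y} f = integral {c..y} f"
      using assms True int by (intro Henstock_Kurzweil_Integration.integral_combine) auto
    thus ?thesis
      using True by (cases "a = y") auto
  next
    case False
    have "integral {c..y} f + integral {y..a} f = integral {c..a} f"
      using assms False int by (intro Henstock_Kurzweil_Integration.integral_combine) auto
    thus ?thesis
      using False by auto
  qed
qed

lemma signed_integral_has_derivative:
  fixes f :: "real \<Rightarrow> real"
  assumes "continuous_on UNIV f"
  shows "((\<lambda>y. integral {a..y} f - integral {y..a} f) has_real_derivative f x) (at x)"
proof -
  define c where "c = min x a - 1"
  have "((\<lambda>y. integral {c..y} f) has_real_derivative f x) (at x within {c..x + 1})"
    using c_def by (intro integral_has_real_derivative continuous_on_subset[OF assms subset_UNIV]) auto
  moreover have "at x within {c..x + 1} = at x"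
    using c_def by (intro at_within_interior) auto
  ultimately have "((\<lambda>y. integral {c..y} f - integral {c..a} f) has_real_derivative f x) (at x)"
    using DERIV_diff[OF _ DERIV_const, of "\<lambda>y. integral {c..y} f"] by fastforce
  thus ?thesis
  proof (rule has_field_derivative_transform_within_open[where S = "{c<..}"])
    fix y :: real assume "y \<in> {c<..}"
    thus "integral {c..y} f - integral {c..a} f = integral {a..y} f - integral {y..a} f"
      using signed_integral_eq_shifted[OF assms, of c a y] c_def by auto
  qed (auto simp: c_def)
qed

lemma integral_pos_before_sign_change:
  fixes g w :: "real \<Rightarrow> real"
  assumes "continuous_on {a..b} g" "continuous_on {a..b} w"
    and "\<And>x y. x < y \<Longrightarrow> g y < g x" and "\<And>t. t \<in> {a..b} \<Longrightarrow> 0 < w t"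
    and "integral {a..b} (\<lambda>t. g t * w t) = 0" and "a < z" "z < b"
  shows "0 < integral {a..z} (\<lambda>t. g t * w t)"
proof -
  have cont: "continuous_on {u..v} (\<lambda>t. g t * w t)" if "a \<le> u" "v \<le> b" for u v
    using continuous_on_subset[OF assms(1)] continuous_on_subset[OF assms(2)] that
    by (intro continuous_intros) auto
  show ?thesis
  proof (cases "0 \<le> g z")
    case True
    have "integral {a..z} (\<lambda>_. 0) < integral {a..z} (\<lambda>t. g t * w t)"
      using assms True cont[of a z] by (intro integral_less_real) (force intro!: mult_pos_pos)+
    thus ?thesis by simp
  next
    case False
    have "integral {z..b} (\<lambda>t. g t * w t) < integral {z..b} (\<lambda>_. 0)"
      using assms False cont[of z b]
      by (intro integral_less_real) (force intro!: mult_neg_pos dest: assms(3))+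
    moreover have "integral {a..z} (\<lambda>t. g t * w t) + integral {z..b} (\<lambda>t. g t * w t)
        = integral {a..b} (\<lambda>t. g t * w t)"
      using assms cont[of a b]
      by (intro Henstock_Kurzweil_Integration.integral_combine integrable_continuous_interval) auto
    ultimately show ?thesis using assms(5) by simp
  qed
qed

lemma deriv_cancel_factor:
  fixes f w :: "real \<Rightarrow> real"
  assumes "(f has_real_derivative D) (at z)" "continuous_on UNIV w" "w z \<noteq> 0"
  shows "deriv (\<lambda>x. f x * w x / w x) z = D"
proof (rule DERIV_imp_deriv)
  have "open {x. w x \<noteq> 0}"
    using assms(2) by (intro open_Collect_neq) auto
  thus "((\<lambda>x. f x * w x / w x) has_real_derivative D) (at z)"
    by (rule has_field_derivative_transform_within_open[OF assms(1)]) (use assms(3) in auto)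
qed

lemma exp_minus_exp_neg_nonzero: "k \<noteq> 0 \<Longrightarrow> exp k - exp (-k) \<noteq> (0::real)"
  by (metis eq_iff_diff_eq_0 exp_inj_iff neg_equal_zero)

definition profile :: "real \<Rightarrow> real \<Rightarrow> real" where
  "profile k t = (if k = 0 then (1 - t) / 2 else (exp (-k*t) - exp (-k)) / (exp k - exp (-k)))"

lemma gg_eq_profile: "gg m1 m2 t k = 2 * (1 / real m1 + 1 / real m2) * profile k t - 2 / real m1"
proof (cases "k = 0")
  case True
  thus ?thesis by (simp add: gg_def profile_def algebra_simps add_divide_distrib diff_divide_distrib)
next
  case False
  define D where "D = exp k - exp (-k)"
  have "D \<noteq> 0" using exp_minus_exp_neg_nonzero[OF False] by (simp add: D_def)
  thus ?thesis
    using False by (simp add: gg_def profile_def D_def[symmetric] divide_simps) (simp add: D_def algebra_simps)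
qed

lemma profile_uminus: "profile (-k) t = 1 - profile k (-t)"
  using exp_minus_exp_neg_nonzero[of k] exp_minus_exp_neg_nonzero[of "-k"]
  by (cases "k = 0") (simp_all add: profile_def field_simps)

lemma profile_endpoints: "profile k (-1) = 1" "profile k 1 = 0"
  using exp_minus_exp_neg_nonzero[of k] by (auto simp: profile_def)

lemma profile_has_neg_derivative: "\<exists>D<0. ((\<lambda>t. profile k t) has_real_derivative D) (at t)"
proof (cases "k = 0")
  case True
  have "((\<lambda>t. profile k t) has_real_derivative -1/2) (at t)"
    using True by (simp add: profile_def) (auto intro!: derivative_eq_intros)
  thus ?thesis by (intro exI[of _ "-1/2"]) simp
next
  case False
  have "0 < k / (exp k - exp (-k))"
    using False by (cases "k > 0") (auto simp: zero_less_divide_iff)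
  hence "0 < k / (exp k - exp (-k)) * exp (-k*t)"
    by (rule mult_pos_pos) simp
  hence neg: "-k * exp (-k*t) / (exp k - exp (-k)) < 0"
    by simp
  have "((\<lambda>t. (exp (-k*t) - exp (-k)) / (exp k - exp (-k))) has_real_derivative
          -k * exp (-k*t) / (exp k - exp (-k))) (at t)"
    using False by (auto intro!: derivative_eq_intros)
  thus ?thesis
    using False neg by (intro exI[of _ "-k * exp (-k*t) / (exp k - exp (-k))"]) (simp add: profile_def)
qed

lemma profile_continuous_t: "continuous_on S (profile k)"
proof (intro continuous_at_imp_continuous_on ballI)
  fix t
  obtain D where "((\<lambda>t. profile k t) has_real_derivative D) (at t)"
    using profile_has_neg_derivative by blast
  thus "isCont (profile k) t" by (rule DERIV_isCont)
qed

lemma profile_strict_antimono_t: "x < y \<Longrightarrow> profile k y < profile k x"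
  using strict_antimono_if_neg_derivative[OF profile_has_neg_derivative] .

lemma profile_bounds: "t \<in> {-1..1} \<Longrightarrow> 0 \<le> profile k t \<and> profile k t \<le> 1"
proof -
  assume "t \<in> {-1..1}"
  hence "profile k 1 \<le> profile k t" "profile k t \<le> profile k (-1)"
    using profile_strict_antimono_t[of t 1 k] profile_strict_antimono_t[of "-1" t k]
    by (cases "t = 1", auto, cases "t = -1", auto)
  thus ?thesis by (simp add: profile_endpoints)
qed

lemma two_lt_weighted_exp:
  fixes t k :: real
  assumes "-1 < t" "t < 1" "k \<noteq> 0"
  shows "2 < (1 + t) * exp (k * (1 - t)) + (1 - t) * exp (-k * (1 + t))"
proof -
  have "(1 + t) * (1 + k * (1 - t)) < (1 + t) * exp (k * (1 - t))"
    using assms add_one_less_exp[of "k * (1 - t)"] by (intro mult_strict_left_mono) auto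
  moreover have "(1 - t) * (1 + -k * (1 + t)) < (1 - t) * exp (-k * (1 + t))"
    using assms add_one_less_exp[of "-k * (1 + t)"] by (intro mult_strict_left_mono) auto
  moreover have "(1 + t) * (1 + k * (1 - t)) + (1 - t) * (1 + -k * (1 + t)) = 2"
    by (simp add: algebra_simps)
  ultimately show ?thesis by linarith
qed

lemma profile_has_derivative_k:
  assumes "k \<noteq> 0"
  shows "((\<lambda>k. profile k t) has_real_derivative
           (2 - (1 + t) * exp (k * (1 - t)) - (1 - t) * exp (-k * (1 + t))) / (exp k - exp (-k))^2) (at k)"
proof -
  have den: "exp k - exp (-k) \<noteq> 0" using exp_minus_exp_neg_nonzero[OF assms] .
  have "(-t * exp (-k*t) + exp (-k)) * (exp k - exp (-k)) - (exp k + exp (-k)) * (exp (-k*t) - exp (-k))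
      = -t * (exp (-k*t) * exp k) + t * (exp (-k*t) * exp (-k)) + 2 * (exp k * exp (-k))
        - exp (-k*t) * exp k - exp (-k*t) * exp (-k)"
    by (simp add: algebra_simps)
  also have "\<dots> = 2 - (1 + t) * exp (k * (1 - t)) - (1 - t) * exp (-k * (1 + t))"
    by (simp add: exp_add[symmetric] algebra_simps)
  finally have num: "(-t * exp (-k*t) + exp (-k)) * (exp k - exp (-k))
      - (exp k + exp (-k)) * (exp (-k*t) - exp (-k))
      = 2 - (1 + t) * exp (k * (1 - t)) - (1 - t) * exp (-k * (1 + t))" .
  have "((\<lambda>k. (exp (-k*t) - exp (-k)) / (exp k - exp (-k))) has_real_derivative
      ((-t * exp (-k*t) + exp (-k)) * (exp k - exp (-k)) - (exp k + exp (-k)) * (exp (-k*t) - exp (-k)))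
        / (exp k - exp (-k))^2) (at k)"
    by (rule DERIV_quotient[unfolded numeral_2_eq_2[symmetric]])
       (use den in \<open>auto intro!: derivative_eq_intros\<close>)
  hence "((\<lambda>k. (exp (-k*t) - exp (-k)) / (exp k - exp (-k))) has_real_derivative
           (2 - (1 + t) * exp (k * (1 - t)) - (1 - t) * exp (-k * (1 + t))) / (exp k - exp (-k))^2) (at k)"
    by (simp only: num)
  thus ?thesis
    by (rule has_field_derivative_transform_within_open[where S = "-{0}"])
       (use assms in \<open>auto simp: profile_def\<close>)
qed

lemma profile_continuous_k: "isCont (\<lambda>k. profile k t) k0"
proof (cases "k0 = 0")
  case False
  thus ?thesis using DERIV_isCont[OF profile_has_derivative_k] by blast
next
  case True
  \<comment> \<open>At k = 0 the defining quotient is 0/0; take the quotient of the difference quotients.\<close>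
  define N where "N k = exp (-k*t) - exp (-k)" for k :: real
  define D where "D k = exp k - exp (-k)" for k :: real
  have "(N has_real_derivative 1 - t) (at 0)" "(D has_real_derivative 2) (at 0)"
    unfolding N_def D_def by (auto intro!: derivative_eq_intros)
  hence "((\<lambda>k. ((N k - N 0) / (k - 0)) / ((D k - D 0) / (k - 0))) \<longlongrightarrow> (1 - t) / 2) (at 0)"
    by (intro tendsto_divide) (auto simp: has_field_derivative_iff)
  moreover have "\<forall>\<^sub>F k in at 0. ((N k - N 0) / (k - 0)) / ((D k - D 0) / (k - 0)) = profile k t"
    by (auto simp: eventually_at_filter N_def D_def profile_def)
  ultimately have "((\<lambda>k. profile k t) \<longlongrightarrow> (1 - t) / 2) (at 0)"
    by (rule Lim_transform_eventually)
  thus ?thesis using True by (simp add: isCont_def profile_def)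
qed

lemma profile_strict_antimono_k:
  assumes "-1 < t" "t < 1" "k1 < k2"
  shows "profile k2 t < profile k1 t"
proof -
  have dec: "profile b t < profile a t" if "a < b" "0 \<le> a \<or> b \<le> 0" for a b
  proof (rule DERIV_neg_imp_decreasing_open[OF \<open>a < b\<close>])
    fix k assume "a < k" "k < b"
    hence "k \<noteq> 0" using that by auto
    have "(2 - (1 + t) * exp (k * (1 - t)) - (1 - t) * exp (-k * (1 + t))) / (exp k - exp (-k))^2 < 0"
      using two_lt_weighted_exp[OF assms(1,2) \<open>k \<noteq> 0\<close>] exp_minus_exp_neg_nonzero[OF \<open>k \<noteq> 0\<close>]
      by (simp add: divide_neg_pos)
    thus "\<exists>y. ((\<lambda>k. profile k t) has_real_derivative y) (at k) \<and> y < 0"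
      using profile_has_derivative_k[OF \<open>k \<noteq> 0\<close>] by blast
  qed (intro continuous_at_imp_continuous_on ballI profile_continuous_k)
  show ?thesis
    using dec[OF assms(3)] dec[of k1 0] dec[of 0 k2] by (cases "0 \<le> k1 \<or> k2 \<le> 0") auto
qed

lemma profile_LIMSEQ_top: "-1 < t \<Longrightarrow> (\<lambda>n. profile (real n) t) \<longlonglongrightarrow> 0"
proof -
  assume "-1 < t"
  hence "(\<lambda>n. (exp (- (real n * (1 + t))) - exp (- (real n * 2))) / (1 - exp (- (real n * 2))))
           \<longlonglongrightarrow> (0 - 0) / (1 - 0)"
    by (intro tendsto_intros exp_neg_mult_LIMSEQ_0) auto
  moreover have "\<forall>\<^sub>F n in sequentially.
      (exp (- (real n * (1 + t))) - exp (- (real n * 2))) / (1 - exp (- (real n * 2))) = profile (real n) t"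
  proof (rule eventually_sequentiallyI[of 1])
    fix n :: nat assume "1 \<le> n"
    hence "real n \<noteq> 0" by simp
    thus "(exp (- (real n * (1 + t))) - exp (- (real n * 2))) / (1 - exp (- (real n * 2))) = profile (real n) t"
      using exp_minus_exp_neg_nonzero[of "real n"]
      by (simp add: profile_def exp_add[symmetric] exp_diff algebra_simps divide_simps)
  qed
  ultimately show ?thesis by (simp add: Lim_transform_eventually)
qed

lemma profile_LIMSEQ_bot: "t < 1 \<Longrightarrow> (\<lambda>n. profile (- real n) t) \<longlonglongrightarrow> 1"
  using tendsto_diff[OF tendsto_const profile_LIMSEQ_top[of "-t"], of 1]
  by (simp add: profile_uminus)

lemma gg_endpoints: "gg m1 m2 (-1) k = 2 / real m2" "gg m1 m2 1 k = - 2 / real m1"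
  by (simp_all add: gg_eq_profile profile_endpoints)

lemma gg_bounds: "t \<in> {-1..1} \<Longrightarrow> \<bar>gg m1 m2 t k\<bar> \<le> 2 * (1 / real m1 + 1 / real m2)"
proof -
  assume "t \<in> {-1..1}"
  hence "0 \<le> profile k t" "profile k t \<le> 1"
    using profile_bounds by auto
  hence "0 \<le> 2 * (1 / real m1 + 1 / real m2) * profile k t"
    "2 * (1 / real m1 + 1 / real m2) * profile k t \<le> 2 * (1 / real m1 + 1 / real m2)"
    by (auto intro: mult_left_le)
  moreover have "\<bar>X - 2 * a\<bar> \<le> 2 * (a + b)"
    if "0 \<le> a" "0 \<le> b" "0 \<le> X" "X \<le> 2 * (a + b)" for X a b :: real
    using that by auto
  ultimately show ?thesis
    unfolding gg_eq_profile by (simp add: divide_inverse)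
qed

lemma gg_continuous_t: "continuous_on S (\<lambda>t. gg m1 m2 t k)"
  unfolding gg_eq_profile by (intro continuous_intros profile_continuous_t)

lemma gg_continuous_k: "isCont (\<lambda>k. gg m1 m2 t k) k0"
  unfolding gg_eq_profile by (intro continuous_intros profile_continuous_k)

lemma gg_has_neg_derivative_t:
  assumes "m1 > 0" "m2 > 0"
  shows "\<exists>D<0. ((\<lambda>t. gg m1 m2 t k) has_real_derivative D) (at t)"
proof -
  obtain D where "D < 0" and D: "((\<lambda>t. profile k t) has_real_derivative D) (at t)"
    using profile_has_neg_derivative by blast
  have "((\<lambda>t. gg m1 m2 t k) has_real_derivative 2 * (1 / real m1 + 1 / real m2) * D) (at t)"
    unfolding gg_eq_profile by (auto intro!: derivative_eq_intros D)
  moreover have "2 * (1 / real m1 + 1 / real m2) * D < 0"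
    using assms \<open>D < 0\<close> by (intro mult_pos_neg mult_pos_pos add_pos_pos) auto
  ultimately show ?thesis by blast
qed

lemma gg_strict_antimono_t:
  "m1 > 0 \<Longrightarrow> m2 > 0 \<Longrightarrow> x < y \<Longrightarrow> gg m1 m2 y k < gg m1 m2 x k"
  using strict_antimono_if_neg_derivative[OF gg_has_neg_derivative_t] .

lemma gg_strict_antimono_k:
  assumes "m1 > 0" "m2 > 0" "-1 < t" "t < 1" "k1 < k2"
  shows "gg m1 m2 t k2 < gg m1 m2 t k1"
proof -
  have "0 < 2 * (1 / real m1 + 1 / real m2)"
    using assms by (intro mult_pos_pos add_pos_pos) auto
  hence "2 * (1 / real m1 + 1 / real m2) * profile k2 t < 2 * (1 / real m1 + 1 / real m2) * profile k1 t"
    using profile_strict_antimono_k[OF assms(3-5)] by (rule mult_strict_left_mono[rotated])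
  thus ?thesis by (simp add: gg_eq_profile)
qed

lemma gg_LIMSEQ_top: "-1 < t \<Longrightarrow> (\<lambda>n. gg m1 m2 t (real n)) \<longlonglongrightarrow> - 2 / real m1"
proof -
  assume "-1 < t"
  hence "(\<lambda>n. gg m1 m2 t (real n)) \<longlonglongrightarrow> 2 * (1 / real m1 + 1 / real m2) * 0 - 2 / real m1"
    unfolding gg_eq_profile by (intro tendsto_intros profile_LIMSEQ_top)
  thus ?thesis by simp
qed

lemma gg_LIMSEQ_bot: "t < 1 \<Longrightarrow> (\<lambda>n. gg m1 m2 t (- real n)) \<longlonglongrightarrow> 2 / real m2"
proof -
  assume "t < 1"
  hence "(\<lambda>n. gg m1 m2 t (- real n)) \<longlonglongrightarrow> 2 * (1 / real m1 + 1 / real m2) * 1 - 2 / real m1"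
    unfolding gg_eq_profile by (intro tendsto_intros profile_LIMSEQ_bot)
  thus ?thesis by simp
qed

lemma gg_poly_exp: "\<exists>P Q :: real poly. \<forall>t. gg m1 m2 t k = poly P t * exp (-k * t) + poly Q t"
proof (cases "k = 0")
  case True
  have "gg m1 m2 t k = poly 0 t * exp (-k * t)
          + poly [:1 / real m2 - 1 / real m1, - 1 / real m1 - 1 / real m2:] t" for t
    using True by (simp add: gg_def diff_divide_distrib add_divide_distrib algebra_simps)
  thus ?thesis by blast
next
  case False
  define D where "D = exp k - exp (-k)"
  have "gg m1 m2 t k = poly [:2 * (1 / real m1 + 1 / real m2) / D:] t * exp (-k * t)
          + poly [:- 2 * (exp k / real m1 + exp (-k) / real m2) / D:] t" for t
    using False by (simp add: gg_def D_def diff_divide_distrib add_divide_distrib algebra_simps)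
  thus ?thesis by blast
qed

lemma higher_deriv_gg_times_poly_differentiable:
  "(deriv ^^ n) (\<lambda>t. gg m1 m2 t k * poly W t) differentiable (at x)"
proof -
  obtain P Q where "\<forall>t. gg m1 m2 t k = poly P t * exp (-k * t) + poly Q t"
    using gg_poly_exp by blast
  hence "(\<lambda>t. gg m1 m2 t k * poly W t) = (\<lambda>t. poly (P * W) t * exp (-k * t) + poly (Q * W) t)"
    by (auto simp: algebra_simps)
  thus ?thesis
    by (simp only: higher_deriv_poly_exp_differentiable)
qed

lemma deriv_gg_quotient_neg:
  fixes w :: "real \<Rightarrow> real"
  assumes "m1 > 0" "m2 > 0" "continuous_on UNIV w" "w z \<noteq> 0"
  shows "deriv (\<lambda>x. gg m1 m2 x k * w x / w x) z < 0"
proof -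
  obtain D where "D < 0" and D: "((\<lambda>t. gg m1 m2 t k) has_real_derivative D) (at z)"
    using gg_has_neg_derivative_t[OF assms(1,2)] by blast
  thus ?thesis
    using deriv_cancel_factor[OF D assms(3,4)] by simp
qed

locale positive_weight =
  fixes m1 m2 :: nat and w :: "real \<Rightarrow> real"
  assumes m1_pos: "m1 > 0" and m2_pos: "m2 > 0"
    and weight_continuous: "continuous_on {-1..1} w"
    and weight_pos: "\<And>t. t \<in> {-1..1} \<Longrightarrow> 0 < w t"
begin

definition moment :: "real \<Rightarrow> real" where
  "moment k = integral {-1..1} (\<lambda>t. gg m1 m2 t k * w t)"

lemma weight_integral_pos: "0 < integral {-1..1} w"
  using integral_less_real[of "-1" 1 "\<lambda>_. 0" w] weight_continuous weight_pos by auto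

lemma moment_LIMSEQ:
  assumes "\<And>t. t \<in> {-1..1} \<Longrightarrow> (\<lambda>n. gg m1 m2 t (u n)) \<longlonglongrightarrow> c t"
  shows "(\<lambda>n. moment (u n)) \<longlonglongrightarrow> integral {-1..1} (\<lambda>t. c t * w t)"
  unfolding moment_def
proof (rule dominated_convergence(2)[where h = "\<lambda>t. (2 * (1 / real m1 + 1 / real m2)) * w t"])
  show "(\<lambda>t. gg m1 m2 t (u n) * w t) integrable_on {-1..1}" for n
    using weight_continuous
    by (intro integrable_continuous_interval continuous_intros gg_continuous_t)
  show "(\<lambda>t. (2 * (1 / real m1 + 1 / real m2)) * w t) integrable_on {-1..1}"
    using weight_continuous by (intro integrable_continuous_interval continuous_intros)
  show "norm (gg m1 m2 t (u n) * w t) \<le> (2 * (1 / real m1 + 1 / real m2)) * w t" if "t \<in> {-1..1}" for n t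
    using gg_bounds[OF that] weight_pos[OF that]
    by (simp add: abs_mult mult_right_mono)
qed (use assms in \<open>auto intro: tendsto_mult_right\<close>)

lemma moment_continuous: "continuous_on UNIV moment"
proof (intro continuous_at_imp_continuous_on ballI continuous_at_sequentiallyI)
  fix k and u :: "nat \<Rightarrow> real"
  assume "u \<longlonglongrightarrow> k"
  hence "(\<lambda>n. moment (u n)) \<longlonglongrightarrow> integral {-1..1} (\<lambda>t. gg m1 m2 t k * w t)"
    by (intro moment_LIMSEQ isCont_tendsto_compose[OF gg_continuous_k])
  thus "(\<lambda>n. moment (u n)) \<longlonglongrightarrow> moment k"
    by (simp add: moment_def)
qed

lemma moment_strict_antimono: "k1 < k2 \<Longrightarrow> moment k2 < moment k1"
  unfolding moment_def using weight_continuous m1_pos m2_pos weight_pos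
  by (intro integral_less_real continuous_intros gg_continuous_t)
     (auto intro!: mult_strict_right_mono gg_strict_antimono_k)

lemma moment_neg_somewhere: "\<exists>k. moment k < 0"
proof -
  define c where "c t = (if t = -1 then 2 / real m2 else - 2 / real m1)" for t :: real
  have "(\<lambda>n. moment (real n)) \<longlonglongrightarrow> integral {-1..1} (\<lambda>t. c t * w t)"
    using gg_LIMSEQ_top[of _ m1 m2]
    by (intro moment_LIMSEQ) (force simp: c_def gg_endpoints)
  also have "integral {-1..1} (\<lambda>t. c t * w t) = integral {-1..1} (\<lambda>t. - 2 / real m1 * w t)"
    by (rule integral_spike[of "{-1}"]) (auto simp: c_def)
  also have "\<dots> = - 2 / real m1 * integral {-1..1} w"
    by simp
  finally have "(\<lambda>n. moment (real n)) \<longlonglongrightarrow> - 2 / real m1 * integral {-1..1} w" .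
  moreover have "- 2 / real m1 * integral {-1..1} w < 0"
    using m1_pos weight_integral_pos by (simp add: mult_neg_pos)
  ultimately have "\<forall>\<^sub>F n in sequentially. moment (real n) < 0"
    by (rule order_tendstoD(2))
  thus ?thesis by (metis eventually_sequentially order_refl)
qed

lemma moment_pos_somewhere: "\<exists>k. moment k > 0"
proof -
  define c where "c t = (if t = 1 then - 2 / real m1 else 2 / real m2)" for t :: real
  have "(\<lambda>n. moment (- real n)) \<longlonglongrightarrow> integral {-1..1} (\<lambda>t. c t * w t)"
    using gg_LIMSEQ_bot[of _ m1 m2]
    by (intro moment_LIMSEQ) (force simp: c_def gg_endpoints)
  also have "integral {-1..1} (\<lambda>t. c t * w t) = integral {-1..1} (\<lambda>t. 2 / real m2 * w t)"
    by (rule integral_spike[of "{1}"]) (auto simp: c_def)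
  also have "\<dots> = 2 / real m2 * integral {-1..1} w"
    by simp
  finally have "(\<lambda>n. moment (- real n)) \<longlonglongrightarrow> 2 / real m2 * integral {-1..1} w" .
  moreover have "0 < 2 / real m2 * integral {-1..1} w"
    using m2_pos weight_integral_pos by simp
  ultimately have "\<forall>\<^sub>F n in sequentially. moment (- real n) > 0"
    by (rule order_tendstoD(1))
  thus ?thesis by (metis eventually_sequentially order_refl)
qed

lemma moment_unique_root: "\<exists>!k. moment k = 0"
proof -
  obtain k1 k2 where "moment k1 > 0" "moment k2 < 0"
    using moment_pos_somewhere moment_neg_somewhere by blast
  moreover from this have "k1 < k2"
    using moment_strict_antimono[of k2 k1] by (cases k1 k2 rule: linorder_cases) auto
  ultimately obtain k where "moment k = 0"
    using IVT2'[of moment k2 0 k1] moment_continuous by (force intro: continuous_on_subset)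
  moreover have "moment k' = 0 \<Longrightarrow> k' = k" for k'
    using moment_strict_antimono[of k k'] moment_strict_antimono[of k' k] \<open>moment k = 0\<close>
    by (cases k k' rule: linorder_cases) auto
  ultimately show ?thesis by blast
qed

lemma moment_The_root: "moment (THE k. moment k = 0) = 0"
  using theI'[OF moment_unique_root] .

end

lemma pp_pos:
  assumes "\<bar>r\<bar> < 1" "t \<in> {-1..1}"
  shows "0 < pp r d t"
proof -
  have "\<bar>t\<bar> \<le> 1"
    using assms(2) by auto
  hence "\<bar>r * t\<bar> \<le> \<bar>r\<bar>"
    by (simp add: abs_mult mult_left_le)
  hence "0 < 1 + r * t"
    using assms(1) by linarith
  thus ?thesis by (simp add: pp_def)
qed

lemma pp_eq_poly: "pp r d = poly ([:1, r:] ^ d)"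
  by (rule ext) (simp add: pp_def mult.commute)

lemma pp_continuous: "continuous_on S (pp r d)"
  unfolding pp_eq_poly by (intro continuous_intros)

theorem mainTheorem8:
  fixes m1 m2 d :: nat and r :: real
  assumes "m1 > 0" and "m2 > 0" and "d > 0" and "0 < \<bar>r\<bar>" and "\<bar>r\<bar> < 1"
  shows "\<exists>G :: real \<Rightarrow> real.
           (\<forall>n x. (deriv ^^ n) G differentiable (at x)) \<and>
           (\<forall>z\<in>{-1..1}. G z = FF m1 m2 r d z) \<and>
           (\<forall>z. -1 < z \<and> z < 1 \<longrightarrow> FF m1 m2 r d z > 0) \<and>
           FF m1 m2 r d (-1) = 0 \<and> FF m1 m2 r d 1 = 0 \<and>
           deriv G (-1) = 2 * pp r d (-1) / real m2 \<and>
           deriv G 1 = - 2 * pp r d 1 / real m1 \<and>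
           (\<forall>z\<in>{-1..1}. deriv (\<lambda>x. deriv G x / pp r d x) z < 0)"
proof -
  interpret positive_weight m1 m2 "pp r d"
    using assms pp_continuous pp_pos by unfold_locales auto
  define K where "K = kk m1 m2 r d"
  define h where "h = (\<lambda>t. gg m1 m2 t K * pp r d t)"
  \<comment> \<open>the antiderivative of h on all of \<real> that agrees with FF on [-1,1]\<close>
  define G where "G x = integral {-1..x} h - integral {x..-1} h" for x
  have FF_eq: "FF m1 m2 r d z = integral {-1..z} h" for z
    by (simp add: FF_def h_def K_def)
  have root: "integral {-1..1} h = 0"
    using moment_The_root by (simp add: h_def K_def kk_def moment_def)
  have G_deriv: "(G has_real_derivative h x) (at x)" for x
    unfolding G_def h_def
    by (intro signed_integral_has_derivative continuous_intros gg_continuous_t pp_continuous)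
  hence deriv_G: "deriv G = h"
    by (intro ext DERIV_imp_deriv)
  have "(deriv ^^ n) G differentiable (at x)" for n x
    using G_deriv higher_deriv_gg_times_poly_differentiable[of _ m1 m2 K "[:1, r:] ^ d"]
    unfolding h_def pp_eq_poly by (rule higher_deriv_differentiable_of_derivative)
  moreover have "0 < FF m1 m2 r d z" if "-1 < z" "z < 1" for z
    unfolding FF_eq h_def using assms(1,2) root that pp_pos[OF assms(5)]
    by (intro integral_pos_before_sign_change[of "-1" 1] gg_continuous_t pp_continuous
        gg_strict_antimono_t) (auto simp: h_def)
  moreover have "deriv (\<lambda>x. deriv G x / pp r d x) z < 0" if "z \<in> {-1..1}" for z
    unfolding deriv_G h_def using assms(1,2) pp_pos[OF assms(5) that, of d]
    by (intro deriv_gg_quotient_neg pp_continuous) simp_all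
  moreover have "G z = FF m1 m2 r d z" if "z \<in> {-1..1}" for z
    using that by (cases "z = -1") (auto simp: G_def FF_eq)
  ultimately show ?thesis
    using root by (intro exI[of _ G]) (auto simp: FF_eq deriv_G h_def gg_endpoints)
qed

end
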